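(* Let $\gamma>0$ and let $\mathcal H$ be a family of real random variables. The family $\{e^{\gamma X}: X\in\mathcal H\}$ is uniformly integrable if and only if there exists a function $k:\mathbb R_+\to\mathbb R_+$ with $k(x)\to+\infty$ as $x\to+\infty$ such that $$\sup_{X\in\mathcal H}\mathbb E[K(X^+)]<+\infty,\qquad K(x)=\int_0^x k(t)e^{\gamma t}\,dt.$$ Moreover, in this case $k$ can be chosen to be $C^\infty$ with $k(0)=\gamma$ and $k'(x)>0$ for all $x\in\mathbb R_+$.
   Context: $X^+=\max(X,0)$. *)

theory Defs
  imports "HOL-Probability.Probability"
begin

text \<open>Expectations are taken as nonnegative (extended-valued) integrals, so no
  separate integrability side condition is lost.\<close>
definition unif_integrable :: "'a measure \<Rightarrow> ('a \<Rightarrow> real) set \<Rightarrow> bool" where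
  "unif_integrable M F \<longleftrightarrow>
     ((\<lambda>c::real. SUP f\<in>F. \<integral>\<^sup>+ \<omega>. ennreal \<bar>f \<omega>\<bar> * indicator {\<omega>. \<bar>f \<omega>\<bar> > c} \<omega> \<partial>M)
        \<longlongrightarrow> 0) at_top"

text \<open>k is C-infinity on [0,\<infinity>): there is a sequence of functions d with d 0 = k
  on [0,\<infinity>) and d (Suc n) the (one-sided at 0) derivative of d n on [0,\<infinity>).\<close>
definition smooth_on_nonneg :: "(real \<Rightarrow> real) \<Rightarrow> (nat \<Rightarrow> real \<Rightarrow> real) \<Rightarrow> bool" where
  "smooth_on_nonneg k d \<longleftrightarrow>
     (\<forall>x\<ge>0. d 0 x = k x) \<and>
     (\<forall>n. \<forall>x\<ge>0. (d n has_real_derivative d (Suc n) x) (at x within {0..}))"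

definition Kfun :: "real \<Rightarrow> (real \<Rightarrow> real) \<Rightarrow> real \<Rightarrow> ennreal" where
  "Kfun \<gamma> k x = (\<integral>\<^sup>+ t\<in>{0..x}. ennreal (k t * exp (\<gamma> * t)) \<partial>lborel)"

definition admissible_k :: "'a measure \<Rightarrow> ('a \<Rightarrow> real) set \<Rightarrow> real \<Rightarrow> (real \<Rightarrow> real) \<Rightarrow> bool" where
  "admissible_k M H \<gamma> k \<longleftrightarrow>
     k \<in> borel_measurable borel \<and> (\<forall>x\<ge>0. k x \<ge> 0) \<and>
     filterlim k at_top at_top \<and>
     (SUP X\<in>H. \<integral>\<^sup>+ \<omega>. Kfun \<gamma> k (max (X \<omega>) 0) \<partial>M) < \<infinity>"

end

theory Submission
  imports Defs
begin

text \<open>If k \<ge> m beyond T, integrating over [x - 1, x] gives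
  K(x) \<ge> m (1 - exp(-\<gamma>))/\<gamma> exp(\<gamma> x) for x \<ge> T + 1, so every tail
  E[exp(\<gamma> X); exp(\<gamma> X) > c] with c large is at most sup E[K(X^+)] divided by a multiple of m,
  and m is arbitrary.

  Conversely, uniform integrability provides thresholds s_j \<ge> 0 at which all tails are below 2^-j.
  Take k(t) = \<gamma> + \<Sum>_j (1 - exp(-a_j t)) with rates a_j = 1/(2^j (1 + s_j^2 exp(\<gamma> s_j))):
  it is smooth, k(0) = \<gamma>, k' > 0, and k \<rightarrow> \<infinity> because each term tends to 1.
  Up to s_j the j-th term contributes at most a_j s_j^2 exp(\<gamma> s_j) \<le> 2^-j to K(x); beyond s_j
  it contributes at most exp(\<gamma> x)/\<gamma>, whose expectation on {X > s_j} is a tail, again \<le> 2^-j/\<gamma>.\<close>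

lemma has_real_derivative_suminf_atLeast_0:
  fixes g g' :: "nat \<Rightarrow> real \<Rightarrow> real" and bound :: "nat \<Rightarrow> real"
  assumes deriv: "\<And>j x. x \<ge> 0 \<Longrightarrow> (g j has_real_derivative g' j x) (at x within {0..})"
    and bounded: "\<And>j x. x \<ge> 0 \<Longrightarrow> \<bar>g' j x\<bar> \<le> bound j" and "summable bound"
    and "summable (\<lambda>j. g j 0)" and "x \<ge> 0"
  shows "((\<lambda>x. \<Sum>j. g j x) has_real_derivative (\<Sum>j. g' j x)) (at x within {0..})"
proof -
  have "uniform_limit {0..} (\<lambda>n x. \<Sum>j<n. g' j x) (\<lambda>x. \<Sum>j. g' j x) sequentially"
    by (rule Weierstrass_m_test_ev[OF _ \<open>summable bound\<close>]) (use bounded in auto)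
  then obtain G where G: "\<And>x. x \<ge> 0 \<Longrightarrow>
      (\<lambda>j. g j x) sums G x \<and> (G has_field_derivative (\<Sum>j. g' j x)) (at x within {0..})"
    using has_field_derivative_series[of "{0..}" g g', OF convex_real_interval(1)]
      deriv \<open>summable (\<lambda>j. g j 0)\<close> by force
  show ?thesis
    by (rule has_field_derivative_transform_within[where d=1, of G])
       (use G \<open>x \<ge> 0\<close> sums_unique in auto)
qed

lemma one_minus_exp_neg_bounds:
  fixes b t :: real
  assumes "0 \<le> b" "0 \<le> t"
  shows "0 \<le> 1 - exp (-(b * t))" "1 - exp (-(b * t)) \<le> b * t" "1 - exp (-(b * t)) \<le> 1"
  using assms exp_ge_add_one_self[of "-(b * t)"] by auto

definition kseries :: "real \<Rightarrow> (nat \<Rightarrow> real) \<Rightarrow> real \<Rightarrow> real" where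
  "kseries \<gamma> a t = \<gamma> + (\<Sum>j. 1 - exp (-(a j * t)))"

definition kseries_deriv :: "real \<Rightarrow> (nat \<Rightarrow> real) \<Rightarrow> nat \<Rightarrow> real \<Rightarrow> real" where
  "kseries_deriv \<gamma> a n t =
     (if n = 0 then kseries \<gamma> a t else (-1) ^ (n - 1) * (\<Sum>j. a j ^ n * exp (-(a j * t))))"

lemma kseries_0: "kseries \<gamma> a 0 = \<gamma>"
  by (simp add: kseries_def)

lemma kseries_measurable: "kseries \<gamma> a \<in> borel_measurable borel"
  unfolding kseries_def[abs_def] by measurable

context
  fixes a :: "nat \<Rightarrow> real"
  assumes a_pos: "\<And>j. 0 < a j" and a_le_1: "\<And>j. a j \<le> 1" and summable_a: "summable a"
begin

lemma summable_one_minus_exp_neg: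
  assumes "t \<ge> 0" shows "summable (\<lambda>j. 1 - exp (-(a j * t)))"
proof (rule summable_comparison_test[OF _ summable_mult2[OF summable_a, of t]])
  show "\<exists>N. \<forall>j\<ge>N. norm (1 - exp (-(a j * t))) \<le> a j * t"
    using one_minus_exp_neg_bounds[OF less_imp_le[OF a_pos] assms] by auto
qed

lemma power_mult_exp_neg_le:
  assumes "n > 0" "t \<ge> 0" shows "\<bar>a j ^ n * exp (-(a j * t))\<bar> \<le> a j"
proof -
  have "a j ^ n \<le> a j"
    using power_decreasing[of 1 n "a j"] assms a_le_1[of j] a_pos[of j] by simp
  moreover have "a j ^ n * exp (-(a j * t)) \<le> a j ^ n"
    using mult_left_mono[of "exp (-(a j * t))" 1 "a j ^ n"] assms a_pos[of j] by simp
  ultimately have "a j ^ n * exp (-(a j * t)) \<le> a j" by linarith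
  then show ?thesis using a_pos[of j] by (subst abs_of_nonneg) auto
qed

lemma summable_power_mult_exp_neg:
  assumes "n > 0" "t \<ge> 0" shows "summable (\<lambda>j. a j ^ n * exp (-(a j * t)))"
  by (rule summable_comparison_test[OF _ summable_a]) (use power_mult_exp_neg_le[OF assms] in auto)

lemma smooth_on_nonneg_kseries: "smooth_on_nonneg (kseries \<gamma> a) (kseries_deriv \<gamma> a)"
  unfolding smooth_on_nonneg_def
proof (intro conjI allI impI)
  fix n and x :: real assume x: "x \<ge> 0"
  show "(kseries_deriv \<gamma> a n has_real_derivative kseries_deriv \<gamma> a (Suc n) x) (at x within {0..})"
  proof (cases n)
    case 0
    have "((\<lambda>x. \<Sum>j. 1 - exp (-(a j * x))) has_real_derivative (\<Sum>j. a j ^ 1 * exp (-(a j * x))))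
        (at x within {0..})"
      by (rule has_real_derivative_suminf_atLeast_0[OF _ power_mult_exp_neg_le summable_a])
         (use x in \<open>auto intro!: derivative_eq_intros\<close>)
    then have "((\<lambda>x. \<gamma> + (\<Sum>j. 1 - exp (-(a j * x)))) has_real_derivative (\<Sum>j. a j ^ 1 * exp (-(a j * x))))
        (at x within {0..})"
      using DERIV_add[OF DERIV_const] by fastforce
    moreover have "kseries_deriv \<gamma> a 0 = (\<lambda>x. \<gamma> + (\<Sum>j. 1 - exp (-(a j * x))))"
      by (simp add: fun_eq_iff kseries_deriv_def kseries_def)
    ultimately show ?thesis using 0 by (simp add: kseries_deriv_def)
  next
    case (Suc m)
    have "((\<lambda>x. \<Sum>j. a j ^ Suc m * exp (-(a j * x)))
        has_real_derivative (\<Sum>j. - (a j ^ Suc (Suc m) * exp (-(a j * x))))) (at x within {0..})"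
    proof (rule has_real_derivative_suminf_atLeast_0[OF _ _ summable_a])
      fix j and y :: real assume "y \<ge> 0"
      show "\<bar>- (a j ^ Suc (Suc m) * exp (-(a j * y)))\<bar> \<le> a j"
        using power_mult_exp_neg_le[of "Suc (Suc m)" y j] \<open>y \<ge> 0\<close> by (simp only: abs_minus_cancel)
    qed (use x summable_power_mult_exp_neg[of "Suc m" 0] in \<open>auto intro!: derivative_eq_intros\<close>)
    then have "((\<lambda>x. (-1) ^ m * (\<Sum>j. a j ^ Suc m * exp (-(a j * x))))
        has_real_derivative (-1) ^ m * - (\<Sum>j. a j ^ Suc (Suc m) * exp (-(a j * x)))) (at x within {0..})"
      using suminf_minus[OF summable_power_mult_exp_neg[OF _ x, of "Suc (Suc m)"]]
      by (intro DERIV_cmult) simp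
    then show ?thesis using Suc by (simp add: kseries_deriv_def[abs_def])
  qed
qed (simp add: kseries_deriv_def)

lemma kseries_deriv_1_pos: "x \<ge> 0 \<Longrightarrow> kseries_deriv \<gamma> a 1 x > 0"
  using suminf_pos[OF summable_power_mult_exp_neg[of 1 x]] a_pos by (simp add: kseries_deriv_def)

lemma kseries_nonneg: "\<gamma> \<ge> 0 \<Longrightarrow> x \<ge> 0 \<Longrightarrow> kseries \<gamma> a x \<ge> 0"
  unfolding kseries_def
  using suminf_nonneg[OF summable_one_minus_exp_neg[of x]]
    one_minus_exp_neg_bounds(1)[OF less_imp_le[OF a_pos]] by simp

text \<open>Once t \<ge> \<Sum>j<N. 1/a j, each of the first N terms is at least 1 - exp(-1) \<ge> 1/2.\<close>
lemma filterlim_kseries_at_top: "filterlim (kseries \<gamma> a) at_top at_top"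
proof (subst filterlim_at_top, intro allI)
  fix z :: real
  obtain N :: nat where N: "real N \<ge> 2 * (z - \<gamma>)" using real_arch_simple by blast
  have exp_neg_1: "exp (-1::real) \<le> 1/2"
    using exp_ge_add_one_self[of 1] by (simp add: exp_minus field_simps)
  show "eventually (\<lambda>t. z \<le> kseries \<gamma> a t) at_top"
  proof (rule eventually_at_top_linorder[THEN iffD2], intro exI allI impI)
    fix t assume t: "(\<Sum>j<N. 1 / a j) \<le> t"
    have "0 \<le> (\<Sum>j<N. 1 / a j)" using a_pos by (simp add: sum_nonneg less_imp_le)
    with t have t_nonneg: "t \<ge> 0" by linarith
    have "1/2 \<le> 1 - exp (-(a j * t))" if "j < N" for j
    proof -
      have "1 / a j \<le> t"
        using t member_le_sum[of j "{..<N}" "\<lambda>j. 1 / a j"] that a_pos by (simp add: less_imp_le)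
      then have "1 \<le> a j * t" using a_pos[of j] by (simp add: field_simps)
      then have "exp (-(a j * t)) \<le> exp (-1)" by simp
      then show ?thesis using exp_neg_1 by linarith
    qed
    then have "real N / 2 \<le> (\<Sum>j<N. 1 - exp (-(a j * t)))"
      using sum_mono[of "{..<N}" "\<lambda>_. 1/2::real"] by fastforce
    also have "\<dots> \<le> (\<Sum>j. 1 - exp (-(a j * t)))"
      by (rule sum_le_suminf[OF summable_one_minus_exp_neg[OF t_nonneg]])
         (use one_minus_exp_neg_bounds(1)[OF less_imp_le[OF a_pos] t_nonneg] in auto)
    finally show "z \<le> kseries \<gamma> a t" unfolding kseries_def using N by simp
  qed
qed

end

lemma nn_integral_exp_Icc:
  fixes \<gamma> u v :: real
  assumes "\<gamma> > 0" "u \<le> v"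
  shows "(\<integral>\<^sup>+t. ennreal (exp (\<gamma> * t)) * indicator {u..v} t \<partial>lborel)
    = ennreal ((exp (\<gamma> * v) - exp (\<gamma> * u)) / \<gamma>)"
proof -
  have "(\<integral>\<^sup>+t. ennreal (exp (\<gamma> * t)) * indicator {u..v} t \<partial>lborel)
      = ennreal (exp (\<gamma> * v) / \<gamma> - exp (\<gamma> * u) / \<gamma>)"
    by (rule nn_integral_FTC_Icc[where F = "\<lambda>t. exp (\<gamma> * t) / \<gamma>"])
       (use assms in \<open>auto intro!: derivative_eq_intros\<close>)
  then show ?thesis by (simp add: diff_divide_distrib)
qed

lemma Kfun_measurable:
  assumes [measurable]: "k \<in> borel_measurable borel"
  shows "Kfun \<gamma> k \<in> borel_measurable borel"
proof -
  have [measurable]: "Measurable.pred (borel \<Otimes>\<^sub>M borel) (\<lambda>x::real \<times> real. snd x \<in> {0..fst x})"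
    unfolding atLeastAtMost_iff by measurable
  show ?thesis
    unfolding Kfun_def[abs_def] by (rule lborel.borel_measurable_nn_integral) measurable
qed

lemma Kfun_ge_exp:
  fixes k :: "real \<Rightarrow> real" and \<gamma> m T x :: real
  assumes "\<gamma> > 0" "m \<ge> 0" "T \<ge> 0" and k_ge: "\<And>t. t \<ge> T \<Longrightarrow> m \<le> k t" and "x \<ge> T + 1"
  shows "ennreal (m * ((1 - exp (-\<gamma>)) / \<gamma>) * exp (\<gamma> * x)) \<le> Kfun \<gamma> k x"
proof -
  have "exp (\<gamma> * (x - 1)) = exp (\<gamma> * x) * exp (-\<gamma>)"
    by (simp add: exp_add[symmetric] algebra_simps)
  then have "ennreal (m * ((1 - exp (-\<gamma>)) / \<gamma>) * exp (\<gamma> * x))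
      = ennreal m * ennreal ((exp (\<gamma> * x) - exp (\<gamma> * (x - 1))) / \<gamma>)"
    using assms by (simp add: ennreal_mult[symmetric] field_simps)
  also have "\<dots> = (\<integral>\<^sup>+t. ennreal m * (ennreal (exp (\<gamma> * t)) * indicator {x - 1..x} t) \<partial>lborel)"
    using assms by (simp add: nn_integral_cmult nn_integral_exp_Icc)
  also have "\<dots> \<le> (\<integral>\<^sup>+t. ennreal (k t * exp (\<gamma> * t)) * indicator {0..x} t \<partial>lborel)"
  proof (rule nn_integral_mono)
    fix t
    show "ennreal m * (ennreal (exp (\<gamma> * t)) * indicator {x - 1..x} t)
        \<le> ennreal (k t * exp (\<gamma> * t)) * indicator {0..x} t"
    proof (cases "t \<in> {x - 1..x}")
      case True
      then have "m * exp (\<gamma> * t) \<le> k t * exp (\<gamma> * t)"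
        using k_ge assms by (intro mult_right_mono) auto
      then show ?thesis using True assms by (simp add: ennreal_mult[symmetric] ennreal_leI)
    qed simp
  qed
  finally show ?thesis by (simp add: Kfun_def)
qed

text \<open>Below s the term 1 - exp(-b t) is at most b s; above s it is at most 1.\<close>
lemma nn_integral_one_minus_exp_neg_mult_exp_le:
  fixes b s \<gamma> x :: real
  assumes "b > 0" "s \<ge> 0" "\<gamma> > 0" "x \<ge> 0"
  shows "(\<integral>\<^sup>+t. ennreal ((1 - exp (-(b * t))) * exp (\<gamma> * t)) * indicator {0..x} t \<partial>lborel)
     \<le> ennreal (b * s\<^sup>2 * exp (\<gamma> * s)) + ennreal (exp (\<gamma> * x) / \<gamma>) * indicator {s<..} x"
proof (cases "x \<le> s")
  case True
  define C where "C = b * s * exp (\<gamma> * s)"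
  have "(\<integral>\<^sup>+t. ennreal ((1 - exp (-(b * t))) * exp (\<gamma> * t)) * indicator {0..x} t \<partial>lborel)
      \<le> (\<integral>\<^sup>+t. ennreal C * indicator {0..x} t \<partial>lborel)"
  proof (rule nn_integral_mono)
    fix t
    show "ennreal ((1 - exp (-(b * t))) * exp (\<gamma> * t)) * indicator {0..x} t \<le> ennreal C * indicator {0..x} t"
    proof (cases "t \<in> {0..x}")
      case t: True
      have "b * t \<le> b * s" using t True assms by (intro mult_left_mono) auto
      moreover have "1 - exp (-(b * t)) \<le> b * t"
        using one_minus_exp_neg_bounds(2)[of b t] t assms by auto
      ultimately have "1 - exp (-(b * t)) \<le> b * s" by linarith
      moreover have "exp (\<gamma> * t) \<le> exp (\<gamma> * s)" using t True assms by simp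
      ultimately have "(1 - exp (-(b * t))) * exp (\<gamma> * t) \<le> C"
        unfolding C_def using one_minus_exp_neg_bounds(1)[of b t] t assms
        by (intro mult_mono) auto
      then show ?thesis using t by (simp add: ennreal_leI)
    qed simp
  qed
  also have "\<dots> = ennreal (C * x)"
    using assms by (simp add: nn_integral_cmult_indicator C_def ennreal_mult'')
  also have "\<dots> \<le> ennreal (b * s\<^sup>2 * exp (\<gamma> * s))"
    using True assms by (intro ennreal_leI) (simp add: C_def power2_eq_square mult_left_mono)
  finally show ?thesis by (simp add: add_increasing2)
next
  case False
  have "(\<integral>\<^sup>+t. ennreal ((1 - exp (-(b * t))) * exp (\<gamma> * t)) * indicator {0..x} t \<partial>lborel)
      \<le> (\<integral>\<^sup>+t. ennreal (exp (\<gamma> * t)) * indicator {0..x} t \<partial>lborel)"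
  proof (rule nn_integral_mono)
    fix t
    show "ennreal ((1 - exp (-(b * t))) * exp (\<gamma> * t)) * indicator {0..x} t
        \<le> ennreal (exp (\<gamma> * t)) * indicator {0..x} t"
      using one_minus_exp_neg_bounds(3)[of b t] assms
      by (cases "t \<in> {0..x}") (auto intro!: ennreal_leI)
  qed
  also have "\<dots> \<le> ennreal (exp (\<gamma> * x) / \<gamma>)"
    using assms by (simp add: nn_integral_exp_Icc divide_right_mono ennreal_leI)
  finally show ?thesis using False by (simp add: add_increasing)
qed

lemma Kfun_kseries_le:
  fixes a s :: "nat \<Rightarrow> real" and \<gamma> x :: real
  assumes a_pos: "\<And>j. 0 < a j" and a_le_1: "\<And>j. a j \<le> 1" and summable_a: "summable a"
    and "\<And>j. s j \<ge> 0" "\<gamma> > 0" "x \<ge> 0"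
  shows "Kfun \<gamma> (kseries \<gamma> a) x \<le> ennreal (exp (\<gamma> * x)) +
    (\<Sum>j. ennreal (a j * (s j)\<^sup>2 * exp (\<gamma> * s j)) + ennreal (exp (\<gamma> * x) / \<gamma>) * indicator {s j<..} x)"
proof -
  let ?term = "\<lambda>j t. ennreal ((1 - exp (-(a j * t))) * exp (\<gamma> * t)) * indicator {0..x} t"
  have split: "ennreal (kseries \<gamma> a t * exp (\<gamma> * t)) * indicator {0..x} t =
      ennreal (\<gamma> * exp (\<gamma> * t)) * indicator {0..x} t + (\<Sum>j. ?term j t)" for t
  proof (cases "t \<in> {0..x}")
    case True
    then have terms_nonneg: "0 \<le> (1 - exp (-(a j * t))) * exp (\<gamma> * t)" for j
      using one_minus_exp_neg_bounds(1)[OF less_imp_le[OF a_pos]] by simp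
    have summable: "summable (\<lambda>j. (1 - exp (-(a j * t))) * exp (\<gamma> * t))"
      using summable_one_minus_exp_neg[OF a_pos a_le_1 summable_a] True by (simp add: summable_mult2)
    have "kseries \<gamma> a t * exp (\<gamma> * t) = \<gamma> * exp (\<gamma> * t) + (\<Sum>j. (1 - exp (-(a j * t))) * exp (\<gamma> * t))"
      using suminf_mult2[OF summable_one_minus_exp_neg[OF a_pos a_le_1 summable_a], of t "exp (\<gamma> * t)"] True
      by (simp add: kseries_def distrib_right)
    then show ?thesis
      using True \<open>\<gamma> > 0\<close> terms_nonneg suminf_nonneg[OF summable terms_nonneg]
      by (simp add: ennreal_plus suminf_ennreal2[OF terms_nonneg summable])
  qed simp
  have "Kfun \<gamma> (kseries \<gamma> a) x
      = (\<integral>\<^sup>+t. ennreal (\<gamma> * exp (\<gamma> * t)) * indicator {0..x} t \<partial>lborel) + (\<Sum>j. \<integral>\<^sup>+t. ?term j t \<partial>lborel)"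
    unfolding Kfun_def split by (simp add: nn_integral_add nn_integral_suminf[symmetric])
  also have "(\<integral>\<^sup>+t. ennreal (\<gamma> * exp (\<gamma> * t)) * indicator {0..x} t \<partial>lborel)
      = ennreal (exp (\<gamma> * x) - exp (\<gamma> * 0))"
    by (rule nn_integral_FTC_Icc) (use assms in \<open>auto intro!: derivative_eq_intros\<close>)
  also have "\<dots> \<le> ennreal (exp (\<gamma> * x))" by (rule ennreal_leI) simp
  also have "(\<Sum>j. \<integral>\<^sup>+t. ?term j t \<partial>lborel) \<le>
      (\<Sum>j. ennreal (a j * (s j)\<^sup>2 * exp (\<gamma> * s j)) + ennreal (exp (\<gamma> * x) / \<gamma>) * indicator {s j<..} x)"
    by (intro suminf_le summableI nn_integral_one_minus_exp_neg_mult_exp_le) (use assms in auto)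
  finally show ?thesis by (simp add: add_mono)
qed

definition exp_tail :: "'a measure \<Rightarrow> real \<Rightarrow> ('a \<Rightarrow> real) \<Rightarrow> real \<Rightarrow> ennreal" where
  "exp_tail M \<gamma> X c = (\<integral>\<^sup>+\<omega>. ennreal (exp (\<gamma> * X \<omega>)) * indicator {\<omega>. exp (\<gamma> * X \<omega>) > c} \<omega> \<partial>M)"

lemma unif_integrable_exp_iff:
  "unif_integrable M ((\<lambda>X \<omega>. exp (\<gamma> * X \<omega>)) ` H) \<longleftrightarrow>
    ((\<lambda>c. SUP X\<in>H. exp_tail M \<gamma> X c) \<longlongrightarrow> 0) at_top"
  by (simp add: unif_integrable_def exp_tail_def image_image)

lemma tendsto_0_ennreal_if_eventually_le:
  fixes f :: "'b \<Rightarrow> ennreal"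
  assumes "\<And>e::real. e > 0 \<Longrightarrow> eventually (\<lambda>x. f x \<le> ennreal e) F"
  shows "(f \<longlongrightarrow> 0) F"
proof (rule order_tendstoI)
  fix a :: ennreal assume "0 < a"
  then obtain b where "0 < b" "b < a" using dense by blast
  then obtain e where "e > 0" "b = ennreal e"
    using less_top_ennreal[of b] order_less_le_trans[OF \<open>b < a\<close> top_greatest] by force
  then show "eventually (\<lambda>x. f x < a) F"
    using assms[of e] \<open>b < a\<close> by (auto elim: eventually_mono)
qed simp

lemma exp_tail_le_nn_integral_Kfun:
  fixes k :: "real \<Rightarrow> real" and \<gamma> m T c :: real
  assumes "\<gamma> > 0" "m > 0" "T \<ge> 0" "\<And>t. t \<ge> T \<Longrightarrow> m \<le> k t" "c \<ge> exp (\<gamma> * (T + 1))"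
    and "k \<in> borel_measurable borel" "X \<in> borel_measurable M"
  shows "exp_tail M \<gamma> X c
    \<le> ennreal (1 / (m * ((1 - exp (-\<gamma>)) / \<gamma>))) * (\<integral>\<^sup>+\<omega>. Kfun \<gamma> k (max (X \<omega>) 0) \<partial>M)"
proof -
  define q where "q = m * ((1 - exp (-\<gamma>)) / \<gamma>)"
  have "q > 0" using assms by (simp add: q_def)
  have "exp_tail M \<gamma> X c \<le> (\<integral>\<^sup>+\<omega>. ennreal (1 / q) * Kfun \<gamma> k (max (X \<omega>) 0) \<partial>M)"
    unfolding exp_tail_def
  proof (rule nn_integral_mono)
    fix \<omega>
    show "ennreal (exp (\<gamma> * X \<omega>)) * indicator {\<omega>. exp (\<gamma> * X \<omega>) > c} \<omega>
        \<le> ennreal (1 / q) * Kfun \<gamma> k (max (X \<omega>) 0)"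
    proof (cases "exp (\<gamma> * X \<omega>) > c")
      case True
      then have "exp (\<gamma> * (T + 1)) < exp (\<gamma> * X \<omega>)" using assms(5) by linarith
      then have "\<gamma> * (T + 1) < \<gamma> * X \<omega>" by simp
      then have "X \<omega> \<ge> T + 1" using \<open>\<gamma> > 0\<close> by simp
      then have "ennreal (q * exp (\<gamma> * X \<omega>)) \<le> Kfun \<gamma> k (max (X \<omega>) 0)"
        using Kfun_ge_exp[of \<gamma> m T k "X \<omega>"] assms by (simp add: q_def max_def)
      then have "ennreal (1 / q) * ennreal (q * exp (\<gamma> * X \<omega>)) \<le> ennreal (1 / q) * Kfun \<gamma> k (max (X \<omega>) 0)"
        by (rule mult_left_mono) simp
      then show ?thesis using True \<open>q > 0\<close> by (simp add: ennreal_mult[symmetric])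
    qed simp
  qed
  also have "\<dots> = ennreal (1 / q) * (\<integral>\<^sup>+\<omega>. Kfun \<gamma> k (max (X \<omega>) 0) \<partial>M)"
    using measurable_compose[OF _ Kfun_measurable[OF assms(6)], of "\<lambda>\<omega>. max (X \<omega>) 0" M] assms(7)
    by (intro nn_integral_cmult) auto
  finally show ?thesis by (simp add: q_def)
qed

lemma admissible_imp_unif_integrable:
  assumes "\<gamma> > 0" and admissible: "admissible_k M H \<gamma> k"
    and measurable: "\<And>X. X \<in> H \<Longrightarrow> X \<in> borel_measurable M"
  shows "unif_integrable M ((\<lambda>X \<omega>. exp (\<gamma> * X \<omega>)) ` H)"
  unfolding unif_integrable_exp_iff
proof (rule tendsto_0_ennreal_if_eventually_le)
  fix e :: real assume "e > 0"
  obtain B where "B \<ge> 0" and B: "(SUP X\<in>H. \<integral>\<^sup>+\<omega>. Kfun \<gamma> k (max (X \<omega>) 0) \<partial>M) = ennreal B"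
    using admissible less_top_ennreal by (auto simp: admissible_k_def)
  define q where "q = (1 - exp (-\<gamma>)) / \<gamma>"
  define m where "m = (B + 1) / (q * e)"
  have "q > 0" "m > 0" using \<open>\<gamma> > 0\<close> \<open>B \<ge> 0\<close> \<open>e > 0\<close> by (simp_all add: q_def m_def)
  obtain T where "\<And>t. t \<ge> T \<Longrightarrow> m \<le> k t"
    using admissible unfolding admissible_k_def filterlim_at_top eventually_at_top_linorder by blast
  then have T: "\<And>t. t \<ge> max T 0 \<Longrightarrow> m \<le> k t" by simp
  have "(SUP X\<in>H. exp_tail M \<gamma> X c) \<le> ennreal e" if c: "c \<ge> exp (\<gamma> * (max T 0 + 1))" for c
  proof -
    have "(SUP X\<in>H. exp_tail M \<gamma> X c) \<le> ennreal (1 / (m * q)) * ennreal B"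
    proof (rule SUP_least)
      fix X assume "X \<in> H"
      have "exp_tail M \<gamma> X c \<le> ennreal (1 / (m * q)) * (\<integral>\<^sup>+\<omega>. Kfun \<gamma> k (max (X \<omega>) 0) \<partial>M)"
        using exp_tail_le_nn_integral_Kfun[of \<gamma> m "max T 0" k c X M] \<open>\<gamma> > 0\<close> \<open>m > 0\<close> T c admissible measurable[OF \<open>X \<in> H\<close>]
        by (simp add: admissible_k_def q_def)
      also have "\<dots> \<le> ennreal (1 / (m * q)) * ennreal B"
        unfolding B[symmetric] using \<open>X \<in> H\<close> by (intro mult_left_mono SUP_upper) auto
      finally show "exp_tail M \<gamma> X c \<le> ennreal (1 / (m * q)) * ennreal B" .
    qed
    also have "\<dots> \<le> ennreal e"
    proof -
      have "m * q = (B + 1) / e" using \<open>q > 0\<close> by (simp add: m_def)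
      then have "B / (m * q) = B * e / (B + 1)" by simp
      also have "\<dots> \<le> e" using \<open>e > 0\<close> \<open>B \<ge> 0\<close> by (simp add: field_simps)
      finally have "B / (m * q) \<le> e" .
      moreover have "ennreal (1 / (m * q)) * ennreal B = ennreal (B / (m * q))"
        using \<open>m > 0\<close> \<open>q > 0\<close> \<open>B \<ge> 0\<close> by (simp add: ennreal_mult[symmetric])
      ultimately show ?thesis by (simp add: ennreal_leI)
    qed
    finally show ?thesis .
  qed
  then show "eventually (\<lambda>c. (SUP X\<in>H. exp_tail M \<gamma> X c) \<le> ennreal e) at_top"
    by (rule eventually_at_top_linorderI)
qed

lemma exp_tail_thresholds:
  assumes "\<gamma> > 0" and tails: "((\<lambda>c. SUP X\<in>H. exp_tail M \<gamma> X c) \<longlongrightarrow> 0) at_top"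
  obtains s :: "nat \<Rightarrow> real"
  where "\<And>j. s j \<ge> 0" "\<And>j X. X \<in> H \<Longrightarrow> exp_tail M \<gamma> X (exp (\<gamma> * s j)) \<le> ennreal ((1/2)^j)"
proof -
  have "filterlim (\<lambda>s. exp (\<gamma> * s)) at_top at_top"
    by (rule filterlim_compose[OF exp_at_top filterlim_tendsto_pos_mult_at_top[OF tendsto_const \<open>\<gamma> > 0\<close>]])
       (rule filterlim_ident)
  then have "((\<lambda>s. SUP X\<in>H. exp_tail M \<gamma> X (exp (\<gamma> * s))) \<longlongrightarrow> 0) at_top"
    using tendsto_compose_filtermap tails filterlim_compose by blast
  then have "eventually (\<lambda>s. s \<ge> 0 \<and> (SUP X\<in>H. exp_tail M \<gamma> X (exp (\<gamma> * s))) < ennreal ((1/2)^j)) at_top" for j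
    by (intro eventually_conj eventually_ge_at_top order_tendstoD(2)) auto
  then have "\<forall>j. \<exists>s. s \<ge> 0 \<and> (SUP X\<in>H. exp_tail M \<gamma> X (exp (\<gamma> * s))) < ennreal ((1/2)^j)"
    using eventually_happens'[OF trivial_limit_at_top_linorder] by blast
  then obtain s where "\<And>j. s j \<ge> 0" "\<And>j. (SUP X\<in>H. exp_tail M \<gamma> X (exp (\<gamma> * s j))) < ennreal ((1/2)^j)"
    by metis
  then show thesis
    by (intro that[of s]) (auto dest: SUP_lessD intro: less_imp_le)
qed

lemma nn_integral_exp_pos_part_le:
  assumes "prob_space M" "X \<in> borel_measurable M" "c \<ge> 0"
  shows "(\<integral>\<^sup>+\<omega>. ennreal (exp (\<gamma> * max (X \<omega>) 0)) \<partial>M) \<le> ennreal (1 + c) + exp_tail M \<gamma> X c"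
proof -
  have "(\<integral>\<^sup>+\<omega>. ennreal (exp (\<gamma> * max (X \<omega>) 0)) \<partial>M)
      \<le> (\<integral>\<^sup>+\<omega>. ennreal (1 + c) + ennreal (exp (\<gamma> * X \<omega>)) * indicator {\<omega>. exp (\<gamma> * X \<omega>) > c} \<omega> \<partial>M)"
  proof (rule nn_integral_mono)
    fix \<omega>
    have "exp (\<gamma> * max (X \<omega>) 0) \<le> 1 + c" if "exp (\<gamma> * X \<omega>) \<le> c"
      using that \<open>c \<ge> 0\<close> by (cases "X \<omega> \<ge> 0") (auto simp: max_def)
    then show "ennreal (exp (\<gamma> * max (X \<omega>) 0))
        \<le> ennreal (1 + c) + ennreal (exp (\<gamma> * X \<omega>)) * indicator {\<omega>. exp (\<gamma> * X \<omega>) > c} \<omega>"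
      using \<open>c \<ge> 0\<close> by (cases "exp (\<gamma> * X \<omega>) > c") (auto simp: max_def add_increasing ennreal_leI)
  qed
  also have "\<dots> = ennreal (1 + c) + exp_tail M \<gamma> X c"
    using assms by (simp add: nn_integral_add prob_space.emeasure_space_1 exp_tail_def)
  finally show ?thesis .
qed

lemma nn_integral_exp_above_le_exp_tail:
  assumes "\<gamma> > 0" "s \<ge> 0" and [measurable]: "X \<in> borel_measurable M"
  shows "(\<integral>\<^sup>+\<omega>. ennreal (exp (\<gamma> * max (X \<omega>) 0) / \<gamma>) * indicator {s<..} (max (X \<omega>) 0) \<partial>M)
    \<le> ennreal (1 / \<gamma>) * exp_tail M \<gamma> X (exp (\<gamma> * s))"
proof -
  have "(\<integral>\<^sup>+\<omega>. ennreal (exp (\<gamma> * max (X \<omega>) 0) / \<gamma>) * indicator {s<..} (max (X \<omega>) 0) \<partial>M)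
      \<le> (\<integral>\<^sup>+\<omega>. ennreal (1 / \<gamma>) *
            (ennreal (exp (\<gamma> * X \<omega>)) * indicator {\<omega>. exp (\<gamma> * X \<omega>) > exp (\<gamma> * s)} \<omega>) \<partial>M)"
  proof (rule nn_integral_mono)
    fix \<omega>
    show "ennreal (exp (\<gamma> * max (X \<omega>) 0) / \<gamma>) * indicator {s<..} (max (X \<omega>) 0)
        \<le> ennreal (1 / \<gamma>) * (ennreal (exp (\<gamma> * X \<omega>)) * indicator {\<omega>. exp (\<gamma> * X \<omega>) > exp (\<gamma> * s)} \<omega>)"
    proof (cases "max (X \<omega>) 0 > s")
      case True
      then have "X \<omega> > s" "max (X \<omega>) 0 = X \<omega>" using \<open>s \<ge> 0\<close> by (auto simp: max_def split: if_splits)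
      then show ?thesis
        using \<open>\<gamma> > 0\<close> by (simp add: ennreal_mult[symmetric] divide_inverse mult.commute)
    qed simp
  qed
  also have "\<dots> = ennreal (1 / \<gamma>) * exp_tail M \<gamma> X (exp (\<gamma> * s))"
    unfolding exp_tail_def by (intro nn_integral_cmult) measurable
  finally show ?thesis .
qed

lemma nn_integral_Kfun_kseries_le:
  fixes a s :: "nat \<Rightarrow> real"
  assumes "prob_space M" and [measurable]: "X \<in> borel_measurable M" and "\<gamma> > 0"
    and "\<And>j. 0 < a j" "\<And>j. a j \<le> 1" "summable a" and "\<And>j. s j \<ge> 0"
  shows "(\<integral>\<^sup>+\<omega>. Kfun \<gamma> (kseries \<gamma> a) (max (X \<omega>) 0) \<partial>M) \<le>
    ennreal (1 + exp (\<gamma> * s 0)) + exp_tail M \<gamma> X (exp (\<gamma> * s 0)) +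
    (\<Sum>j. ennreal (a j * (s j)\<^sup>2 * exp (\<gamma> * s j)) + ennreal (1 / \<gamma>) * exp_tail M \<gamma> X (exp (\<gamma> * s j)))"
proof -
  let ?above = "\<lambda>j \<omega>. ennreal (exp (\<gamma> * max (X \<omega>) 0) / \<gamma>) * indicator {s j<..} (max (X \<omega>) 0)"
  have "(\<integral>\<^sup>+\<omega>. Kfun \<gamma> (kseries \<gamma> a) (max (X \<omega>) 0) \<partial>M) \<le> (\<integral>\<^sup>+\<omega>. ennreal (exp (\<gamma> * max (X \<omega>) 0)) +
      (\<Sum>j. ennreal (a j * (s j)\<^sup>2 * exp (\<gamma> * s j)) + ?above j \<omega>) \<partial>M)"
    by (intro nn_integral_mono Kfun_kseries_le) (use assms in auto)
  also have "\<dots> = (\<integral>\<^sup>+\<omega>. ennreal (exp (\<gamma> * max (X \<omega>) 0)) \<partial>M) +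
      (\<Sum>j. ennreal (a j * (s j)\<^sup>2 * exp (\<gamma> * s j)) + (\<integral>\<^sup>+\<omega>. ?above j \<omega> \<partial>M))"
    using assms by (simp add: nn_integral_add nn_integral_suminf prob_space.emeasure_space_1)
  also have "\<dots> \<le> ennreal (1 + exp (\<gamma> * s 0)) + exp_tail M \<gamma> X (exp (\<gamma> * s 0)) +
    (\<Sum>j. ennreal (a j * (s j)\<^sup>2 * exp (\<gamma> * s j)) + ennreal (1 / \<gamma>) * exp_tail M \<gamma> X (exp (\<gamma> * s j)))"
    by (intro add_mono suminf_le summableI order_refl
        nn_integral_exp_pos_part_le nn_integral_exp_above_le_exp_tail) (use assms in auto)
  finally show ?thesis .
qed

lemma nn_integral_Kfun_kseries_le_geometric:
  fixes a s :: "nat \<Rightarrow> real"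
  assumes "prob_space M" "X \<in> borel_measurable M" "\<gamma> > 0"
    and "\<And>j. 0 < a j" "\<And>j. a j \<le> 1" "summable a" "\<And>j. s j \<ge> 0"
    and weight: "\<And>j. a j * (s j)\<^sup>2 * exp (\<gamma> * s j) \<le> (1/2)^j"
    and tail: "\<And>j. exp_tail M \<gamma> X (exp (\<gamma> * s j)) \<le> ennreal ((1/2)^j)"
  shows "(\<integral>\<^sup>+\<omega>. Kfun \<gamma> (kseries \<gamma> a) (max (X \<omega>) 0) \<partial>M)
    \<le> ennreal (1 + exp (\<gamma> * s 0)) + 1 + (\<Sum>j. ennreal ((1 + 1/\<gamma>) * (1/2)^j))"
proof -
  have term_le: "ennreal (a j * (s j)\<^sup>2 * exp (\<gamma> * s j)) + ennreal (1 / \<gamma>) * exp_tail M \<gamma> X (exp (\<gamma> * s j))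
      \<le> ennreal ((1 + 1/\<gamma>) * (1/2)^j)" for j
  proof -
    have "ennreal (a j * (s j)\<^sup>2 * exp (\<gamma> * s j)) + ennreal (1 / \<gamma>) * exp_tail M \<gamma> X (exp (\<gamma> * s j))
        \<le> ennreal ((1/2)^j) + ennreal (1 / \<gamma>) * ennreal ((1/2)^j)"
      using weight tail by (intro add_mono mult_left_mono ennreal_leI) auto
    then show ?thesis
      using \<open>\<gamma> > 0\<close> by (simp add: ennreal_mult[symmetric] distrib_right flip: ennreal_plus)
  qed
  have "exp_tail M \<gamma> X (exp (\<gamma> * s 0)) \<le> 1"
    using tail[of 0] by simp
  moreover have "(\<Sum>j. ennreal (a j * (s j)\<^sup>2 * exp (\<gamma> * s j)) + ennreal (1 / \<gamma>) * exp_tail M \<gamma> X (exp (\<gamma> * s j)))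
      \<le> (\<Sum>j. ennreal ((1 + 1/\<gamma>) * (1/2)^j))"
    by (rule suminf_le[OF term_le summableI summableI])
  ultimately show ?thesis
    using nn_integral_Kfun_kseries_le[OF assms(1-7)] by (meson add_left_mono add_mono order_trans)
qed

lemma unif_integrable_imp_smooth_admissible:
  assumes "prob_space M" "\<gamma> > 0" and measurable: "\<And>X. X \<in> H \<Longrightarrow> X \<in> borel_measurable M"
    and "unif_integrable M ((\<lambda>X \<omega>. exp (\<gamma> * X \<omega>)) ` H)"
  shows "\<exists>k d. admissible_k M H \<gamma> k \<and> smooth_on_nonneg k d \<and> k 0 = \<gamma> \<and> (\<forall>x\<ge>0. d 1 x > 0)"
proof -
  obtain s where s: "\<And>j. s j \<ge> 0"
    and tail: "\<And>j X. X \<in> H \<Longrightarrow> exp_tail M \<gamma> X (exp (\<gamma> * s j)) \<le> ennreal ((1/2)^j)"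
    using exp_tail_thresholds[OF \<open>\<gamma> > 0\<close>] assms(4) unfolding unif_integrable_exp_iff by blast
  define a where "a j = 1 / (2^j * (1 + (s j)\<^sup>2 * exp (\<gamma> * s j)))" for j
  have a_pos: "0 < a j" for j by (simp add: a_def add_pos_nonneg)
  have a_weight: "a j * (s j)\<^sup>2 * exp (\<gamma> * s j) \<le> (1/2)^j" for j
    by (simp add: a_def field_simps add_pos_nonneg)
  have a_le: "a j \<le> (1/2)^j" for j
    unfolding a_def by (simp add: field_simps add_pos_nonneg)
  have a_le_1: "a j \<le> 1" for j
    using a_le[of j] power_le_one[of "1/2::real" j] by simp
  have summable_a: "summable a"
    by (rule summable_comparison_test[OF _ summable_geometric[of "1/2::real"]])
       (use a_pos a_le in \<open>auto simp: abs_of_pos\<close>)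
  define C where "C = ennreal (1 + exp (\<gamma> * s 0)) + 1 + (\<Sum>j. ennreal ((1 + 1/\<gamma>) * (1/2)^j))"
  have "(\<integral>\<^sup>+\<omega>. Kfun \<gamma> (kseries \<gamma> a) (max (X \<omega>) 0) \<partial>M) \<le> C" if "X \<in> H" for X
    unfolding C_def using assms(1) measurable[OF that] \<open>\<gamma> > 0\<close> a_pos a_le_1 summable_a s a_weight tail[OF that]
    by (rule nn_integral_Kfun_kseries_le_geometric)
  then have "(SUP X\<in>H. \<integral>\<^sup>+\<omega>. Kfun \<gamma> (kseries \<gamma> a) (max (X \<omega>) 0) \<partial>M) \<le> C"
    by (rule SUP_least)
  also have "C < \<infinity>"
  proof -
    have "(\<Sum>j. ennreal ((1 + 1/\<gamma>) * (1/2)^j)) \<noteq> top"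
      using \<open>\<gamma> > 0\<close> by (intro ennreal_suminf_neq_top summable_mult summable_geometric) auto
    then show ?thesis by (simp add: C_def less_top[symmetric])
  qed
  finally have "admissible_k M H \<gamma> (kseries \<gamma> a)"
    unfolding admissible_k_def
    using kseries_measurable filterlim_kseries_at_top[OF a_pos a_le_1 summable_a]
      kseries_nonneg[OF a_pos a_le_1 summable_a] \<open>\<gamma> > 0\<close> by auto
  then show ?thesis
    using smooth_on_nonneg_kseries[OF a_pos a_le_1 summable_a, of \<gamma>] kseries_0[of \<gamma> a]
      kseries_deriv_1_pos[OF a_pos a_le_1 summable_a, of _ \<gamma>] by blast
qed

theorem lemma3p2:
  fixes M :: "'a measure" and H :: "('a \<Rightarrow> real) set" and \<gamma> :: real
  assumes "prob_space M"
    and "\<gamma> > 0"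
    and "\<And>X. X \<in> H \<Longrightarrow> X \<in> borel_measurable M"
  shows "(unif_integrable M ((\<lambda>X \<omega>. exp (\<gamma> * X \<omega>)) ` H) \<longleftrightarrow> (\<exists>k. admissible_k M H \<gamma> k))
    \<and> (unif_integrable M ((\<lambda>X \<omega>. exp (\<gamma> * X \<omega>)) ` H) \<longrightarrow>
         (\<exists>k d. admissible_k M H \<gamma> k \<and> smooth_on_nonneg k d \<and> k 0 = \<gamma>
                \<and> (\<forall>x\<ge>0. d 1 x > 0)))"
  using unif_integrable_imp_smooth_admissible[OF assms] admissible_imp_unif_integrable[OF assms(2) _ assms(3)]
  by blast

end
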